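(* Let $\pi_2$ be the five-dimensional complex associative algebra with basis $e_1,\dots,e_5$ and nonzero products $e_1e_1=e_2$, $e_1e_2=e_2e_1=e_3$, $e_1e_4=e_4e_1=e_5$, $e_4e_4=e_5$ (all other products of basis elements are zero). A linear operator on $\pi_2$ is a local derivation if and only if its matrix has the form $$\begin{pmatrix} b_{11} & 0 & 0 & 0 & 0 \\ b_{21} & b_{22} & 0 & 0 & 0 \\ b_{31} & b_{32} & b_{33} & b_{34} & 0 \\ b_{41} & 0 & 0 & b_{41}+b_{11} & 0 \\ b_{51} & b_{52} & 0 & b_{54} & b_{22}+b_{52} \end{pmatrix}$$ with $b_{11},b_{21},b_{22},b_{31},b_{32},b_{33},b_{34},b_{41},b_{51},b_{52},b_{54}\in\mathbb{C}$.
   Context: The matrix of a linear operator $T$ is taken with respect to the basis $e_1,\dots,e_5$, with the $j$-th column giving the coordinates of $T(e_j)$. A derivation of an algebra $A$ is a linear map $D$ with $D(xy)=D(x)y+xD(y)$ for all $x,y\in A$. A linear map $\nabla:A\to A$ is a local derivation if for every $x\in A$ there is a derivation $D_x$ of $A$ (depending on $x$) with $\nabla(x)=D_x(x)$. *)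

theory Defs
  imports "HOL-Analysis.Analysis"
begin

datatype idx = E1 | E2 | E3 | E4 | E5

lemma UNIV_idx: "(UNIV :: idx set) = {E1, E2, E3, E4, E5}"
  by (auto intro: idx.exhaust)

instance idx :: finite
  by standard (simp add: UNIV_idx)

type_synonym pi2 = "complex ^ idx"

abbreviation e :: "idx \<Rightarrow> pi2" where "e k \<equiv> axis k 1"

fun basis_prod :: "idx \<Rightarrow> idx \<Rightarrow> pi2" where
  "basis_prod E1 E1 = e E2"
| "basis_prod E1 E2 = e E3"
| "basis_prod E2 E1 = e E3"
| "basis_prod E1 E4 = e E5"
| "basis_prod E4 E1 = e E5"
| "basis_prod E4 E4 = e E5"
| "basis_prod _ _ = 0"

definition pi2_mult :: "pi2 \<Rightarrow> pi2 \<Rightarrow> pi2" where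
  "pi2_mult x y = (\<Sum>i\<in>UNIV. \<Sum>j\<in>UNIV. (x $ i * y $ j) *s basis_prod i j)"

definition clinear_map :: "(pi2 \<Rightarrow> pi2) \<Rightarrow> bool" where
  "clinear_map f \<longleftrightarrow> Vector_Spaces.linear (*s) (*s) f"

definition derivation :: "(pi2 \<Rightarrow> pi2) \<Rightarrow> bool" where
  "derivation D \<longleftrightarrow> clinear_map D \<and>
     (\<forall>x y. D (pi2_mult x y) = pi2_mult (D x) y + pi2_mult x (D y))"

definition local_derivation :: "(pi2 \<Rightarrow> pi2) \<Rightarrow> bool" where
  "local_derivation N \<longleftrightarrow> clinear_map N \<and>
     (\<forall>x. \<exists>D. derivation D \<and> N x = D x)"

fun idx_nat :: "idx \<Rightarrow> nat" where
  "idx_nat E1 = 0" | "idx_nat E2 = 1" | "idx_nat E3 = 2" | "idx_nat E4 = 3" | "idx_nat E5 = 4"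

definition mat_of_rows :: "complex list list \<Rightarrow> complex ^ idx ^ idx" where
  "mat_of_rows rs = (\<chi> i j. rs ! idx_nat i ! idx_nat j)"

end

theory Submission imports Defs begin

text \<open>
  The derivations of \<open>\<pi>\<^sub>2\<close> form a seven-parameter family: a derivation is
  determined by the images of the generators \<open>e\<^sub>1\<close> and \<open>e\<^sub>4\<close>, and the Leibniz rule on
  \<open>e\<^sub>1e\<^sub>1, e\<^sub>1e\<^sub>2, e\<^sub>1e\<^sub>4, e\<^sub>4e\<^sub>4, e\<^sub>2e\<^sub>4\<close> pins down everything else. If \<open>T\<close> agrees at
  every vector with some derivation, testing at \<open>e\<^sub>2, e\<^sub>3, e\<^sub>4, e\<^sub>5\<close> gives the zero
  pattern of the matrix, and testing at \<open>e\<^sub>1 - e\<^sub>4\<close> and \<open>e\<^sub>2 - e\<^sub>5\<close> the two diagonal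
  relations. Conversely, for a matrix of the stated shape and a fixed vector \<open>x\<close>,
  the equation \<open>D x = T x\<close> is linear in the parameters of \<open>D\<close> and can be solved
  by dividing by the first nonzero one of \<open>x\<^sub>1, x\<^sub>4, x\<^sub>2\<close>; if all three vanish, a
  diagonal derivation suffices.
\<close>

lemma all_idx: "(\<forall>i. P i) \<longleftrightarrow> P E1 \<and> P E2 \<and> P E3 \<and> P E4 \<and> P E5"
  by (metis idx.exhaust)

lemma vec_eq_iff_idx:
  "(v :: 'a ^ idx) = w \<longleftrightarrow>
     v$E1 = w$E1 \<and> v$E2 = w$E2 \<and> v$E3 = w$E3 \<and> v$E4 = w$E4 \<and> v$E5 = w$E5"
  by (simp only: vec_eq_iff all_idx)

lemma sum_UNIV_idx: "(\<Sum>i\<in>UNIV. f i) = f E1 + f E2 + f E3 + f E4 + (f E5 :: 'a::comm_monoid_add)"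
  by (simp add: UNIV_idx add.assoc)

lemma matrix_vector_mult_component_idx:
  "(M *v x) $ i = M$i$E1 * x$E1 + M$i$E2 * x$E2 + M$i$E3 * x$E3 + M$i$E4 * x$E4 + M$i$E5 * x$E5"
  by (simp only: matrix_vector_mult_def vec_lambda_beta sum_UNIV_idx)

lemma pi2_mult_component:
  "pi2_mult x y $ E1 = 0"
  "pi2_mult x y $ E2 = x$E1 * y$E1"
  "pi2_mult x y $ E3 = x$E1 * y$E2 + x$E2 * y$E1"
  "pi2_mult x y $ E4 = 0"
  "pi2_mult x y $ E5 = x$E1 * y$E4 + x$E4 * y$E1 + x$E4 * y$E4"
  by (simp_all add: pi2_mult_def sum_component sum_UNIV_idx axis_def)

definition derivation_matrix ::
    "complex \<Rightarrow> complex \<Rightarrow> complex \<Rightarrow> complex \<Rightarrow> complex \<Rightarrow> complex \<Rightarrow> complex \<Rightarrow> complex ^ idx ^ idx"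
  where "derivation_matrix a b c f g h k = mat_of_rows
    [[a, 0,     0,     0,     0],
     [b, 2*a,   0,     0,     0],
     [c, 2*b,   3*a,   h,     0],
     [f, 0,     0,     a + f, 0],
     [g, 2*f,   0,     k,     2*a + 2*f]]"

lemma derivation_matrix_mult_component:
  "(derivation_matrix a b c f g h k *v x) $ E1 = a * x$E1"
  "(derivation_matrix a b c f g h k *v x) $ E2 = b * x$E1 + 2*a * x$E2"
  "(derivation_matrix a b c f g h k *v x) $ E3 = c * x$E1 + 2*b * x$E2 + 3*a * x$E3 + h * x$E4"
  "(derivation_matrix a b c f g h k *v x) $ E4 = f * x$E1 + (a + f) * x$E4"
  "(derivation_matrix a b c f g h k *v x) $ E5 =
     g * x$E1 + 2*f * x$E2 + k * x$E4 + (2*a + 2*f) * x$E5"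
  by (simp_all add: matrix_vector_mult_component_idx derivation_matrix_def mat_of_rows_def)

lemma clinear_map_matrix_vector_mult: "clinear_map ((*v) M)"
  by (simp add: clinear_map_def matrix_vector_mul_linear_gen)

lemma clinear_map_eq_matrix: "clinear_map D \<Longrightarrow> D = (*v) (matrix D)"
  by (simp add: fun_eq_iff matrix_works clinear_map_def)

lemma derivation_derivation_matrix: "derivation ((*v) (derivation_matrix a b c f g h k))"
  unfolding derivation_def
  by (simp add: clinear_map_matrix_vector_mult vec_eq_iff_idx derivation_matrix_mult_component
      pi2_mult_component algebra_simps)

lemma derivation_eq_derivation_matrix:
  assumes "derivation D"
  shows "\<exists>a b c f g h k. D = (*v) (derivation_matrix a b c f g h k)"
proof -
  define M where "M = matrix D"
  have D_eq: "D = (*v) M"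
    using assms unfolding derivation_def M_def by (blast intro: clinear_map_eq_matrix)
  have "M *v pi2_mult (e i) (e j) = pi2_mult (M *v e i) (e j) + pi2_mult (e i) (M *v e j)" for i j
    using assms unfolding derivation_def D_eq by blast
  note leibniz = this[unfolded vec_eq_iff_idx, simplified matrix_vector_mult_component_idx
      pi2_mult_component vector_add_component axis_def vec_lambda_beta]
  have "M = derivation_matrix (M$E1$E1) (M$E2$E1) (M$E3$E1) (M$E4$E1) (M$E5$E1) (M$E3$E4) (M$E5$E4)"
    using leibniz[of E1 E1] leibniz[of E1 E2] leibniz[of E1 E4] leibniz[of E4 E4] leibniz[of E2 E4]
    by (simp add: vec_eq_iff all_idx derivation_matrix_def mat_of_rows_def algebra_simps)
  then show ?thesis
    using D_eq by metis
qed

lemma local_derivation_iff_pointwise_derivation_matrix: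
  assumes "clinear_map N"
  shows "local_derivation N \<longleftrightarrow> (\<forall>x. \<exists>a b c f g h k. N x = derivation_matrix a b c f g h k *v x)"
  using assms derivation_derivation_matrix derivation_eq_derivation_matrix
  unfolding local_derivation_def by metis

definition local_derivation_matrix ::
    "complex \<Rightarrow> complex \<Rightarrow> complex \<Rightarrow> complex \<Rightarrow> complex \<Rightarrow> complex \<Rightarrow> complex \<Rightarrow> complex \<Rightarrow>
     complex \<Rightarrow> complex \<Rightarrow> complex \<Rightarrow> complex ^ idx ^ idx"
  where "local_derivation_matrix b11 b21 b22 b31 b32 b33 b34 b41 b51 b52 b54 = mat_of_rows
    [[b11, 0,   0,   0,         0],
     [b21, b22, 0,   0,         0],
     [b31, b32, b33, b34,       0],
     [b41, 0,   0,   b41 + b11, 0],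
     [b51, b52, 0,   b54,       b22 + b52]]"

lemma local_derivation_matrix_mult_component:
  "(local_derivation_matrix b11 b21 b22 b31 b32 b33 b34 b41 b51 b52 b54 *v x) $ E1 = b11 * x$E1"
  "(local_derivation_matrix b11 b21 b22 b31 b32 b33 b34 b41 b51 b52 b54 *v x) $ E2 =
     b21 * x$E1 + b22 * x$E2"
  "(local_derivation_matrix b11 b21 b22 b31 b32 b33 b34 b41 b51 b52 b54 *v x) $ E3 =
     b31 * x$E1 + b32 * x$E2 + b33 * x$E3 + b34 * x$E4"
  "(local_derivation_matrix b11 b21 b22 b31 b32 b33 b34 b41 b51 b52 b54 *v x) $ E4 =
     b41 * x$E1 + (b41 + b11) * x$E4"
  "(local_derivation_matrix b11 b21 b22 b31 b32 b33 b34 b41 b51 b52 b54 *v x) $ E5 =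
     b51 * x$E1 + b52 * x$E2 + b54 * x$E4 + (b22 + b52) * x$E5"
  by (simp_all add: matrix_vector_mult_component_idx local_derivation_matrix_def mat_of_rows_def)

lemma pointwise_derivation_matrix_imp_local_derivation_matrix:
  assumes "\<And>x. \<exists>a b c f g h k. M *v x = derivation_matrix a b c f g h k *v x"
  shows "\<exists>b11 b21 b22 b31 b32 b33 b34 b41 b51 b52 b54.
           M = local_derivation_matrix b11 b21 b22 b31 b32 b33 b34 b41 b51 b52 b54"
proof -
  note at = assms[unfolded vec_eq_iff_idx derivation_matrix_mult_component,
      simplified matrix_vector_mult_component_idx]
  have col2: "M$E1$E2 = 0" "M$E4$E2 = 0"
    using at[of "e E2"] by (auto simp: axis_def)
  have col3: "M$E1$E3 = 0" "M$E2$E3 = 0" "M$E4$E3 = 0" "M$E5$E3 = 0"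
    using at[of "e E3"] by (auto simp: axis_def)
  have col4: "M$E1$E4 = 0" "M$E2$E4 = 0"
    using at[of "e E4"] by (auto simp: axis_def)
  have col5: "M$E1$E5 = 0" "M$E2$E5 = 0" "M$E3$E5 = 0" "M$E4$E5 = 0"
    using at[of "e E5"] by (auto simp: axis_def)
  have diag4: "M$E4$E4 = M$E4$E1 + M$E1$E1"
    using at[of "e E1 - e E4"] col4 by (auto simp: axis_def algebra_simps)
  have diag5: "M$E5$E5 = M$E2$E2 + M$E5$E2"
    using at[of "e E2 - e E5"] col5 by (auto simp: axis_def algebra_simps)
  have "M = local_derivation_matrix (M$E1$E1) (M$E2$E1) (M$E2$E2) (M$E3$E1) (M$E3$E2) (M$E3$E3)
      (M$E3$E4) (M$E4$E1) (M$E5$E1) (M$E5$E2) (M$E5$E4)"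
    using col2 col3 col4 col5 diag4 diag5
    by (simp add: vec_eq_iff all_idx local_derivation_matrix_def mat_of_rows_def)
  then show ?thesis
    by blast
qed

lemma local_derivation_matrix_pointwise_derivation_matrix:
  "\<exists>a b c f g h k. local_derivation_matrix b11 b21 b22 b31 b32 b33 b34 b41 b51 b52 b54 *v x =
     derivation_matrix a b c f g h k *v x"
proof -
  let ?T = "local_derivation_matrix b11 b21 b22 b31 b32 b33 b34 b41 b51 b52 b54 *v x"
  have agree: "?T = derivation_matrix a b c f g h k *v x \<longleftrightarrow>
      b11 * x$E1 = a * x$E1 \<and>
      b21 * x$E1 + b22 * x$E2 = b * x$E1 + 2*a * x$E2 \<and>
      ?T$E3 = c * x$E1 + 2*b * x$E2 + 3*a * x$E3 + h * x$E4 \<and>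
      b41 * x$E1 + (b41 + b11) * x$E4 = f * x$E1 + (a + f) * x$E4 \<and>
      ?T$E5 = g * x$E1 + 2*f * x$E2 + k * x$E4 + (2*a + 2*f) * x$E5" for a b c f g h k
    by (simp only: vec_eq_iff_idx derivation_matrix_mult_component
        local_derivation_matrix_mult_component(1,2,4))
  consider "x$E1 \<noteq> 0" | "x$E1 = 0" "x$E4 \<noteq> 0" | "x$E1 = 0" "x$E4 = 0" "x$E2 \<noteq> 0"
    | "x$E1 = 0" "x$E4 = 0" "x$E2 = 0"
    by blast
  then show ?thesis
  proof cases
    case 1
    define b where "b = (b21 * x$E1 + b22 * x$E2 - 2*b11 * x$E2) / x$E1"
    have "?T = derivation_matrix b11 b ((?T$E3 - 2*b * x$E2 - 3*b11 * x$E3) / x$E1) b41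
        ((?T$E5 - 2*b41 * x$E2 - (2*b11 + 2*b41) * x$E5) / x$E1) 0 0 *v x"
      unfolding agree using 1 by (simp add: b_def field_simps)
    then show ?thesis by blast
  next
    case 2
    define a where "a = b22 / 2"
    define f where "f = b41 + b11 - b22 / 2"
    have "?T = derivation_matrix a 0 0 f 0 ((?T$E3 - 3*a * x$E3) / x$E4)
        ((?T$E5 - 2*f * x$E2 - (2*a + 2*f) * x$E5) / x$E4) *v x"
      unfolding agree using 2 by (simp add: a_def f_def field_simps)
    then show ?thesis by blast
  next
    case 3
    have "?T = derivation_matrix (b22 / 2) ((?T$E3 - 3 * (b22 / 2) * x$E3) / (2 * x$E2)) 0
        (b52 / 2) 0 0 0 *v x"
      unfolding agree using 3 by (simp add: local_derivation_matrix_mult_component field_simps)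
    then show ?thesis by blast
  next
    case 4
    have "?T = derivation_matrix (b33 / 3) 0 0 ((b22 + b52) / 2 - b33 / 3) 0 0 0 *v x"
      unfolding agree using 4 by (simp add: local_derivation_matrix_mult_component field_simps)
    then show ?thesis by blast
  qed
qed

theorem theorem5p2:
  fixes T :: "pi2 \<Rightarrow> pi2"
  assumes "clinear_map T"
  shows "local_derivation T \<longleftrightarrow>
    (\<exists>b11 b21 b22 b31 b32 b33 b34 b41 b51 b52 b54 :: complex.
       matrix T = mat_of_rows
         [[b11, 0,   0,   0,         0],
          [b21, b22, 0,   0,         0],
          [b31, b32, b33, b34,       0],
          [b41, 0,   0,   b41 + b11, 0],
          [b51, b52, 0,   b54,       b22 + b52]])"
proof -
  have T_eq: "T = (*v) (matrix T)"
    using assms by (rule clinear_map_eq_matrix)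
  have "local_derivation T \<longleftrightarrow>
      (\<forall>x. \<exists>a b c f g h k. matrix T *v x = derivation_matrix a b c f g h k *v x)"
    using local_derivation_iff_pointwise_derivation_matrix[OF assms] T_eq by metis
  also have "\<dots> \<longleftrightarrow> (\<exists>b11 b21 b22 b31 b32 b33 b34 b41 b51 b52 b54.
      matrix T = local_derivation_matrix b11 b21 b22 b31 b32 b33 b34 b41 b51 b52 b54)"
    using pointwise_derivation_matrix_imp_local_derivation_matrix
      local_derivation_matrix_pointwise_derivation_matrix by metis
  finally show ?thesis
    unfolding local_derivation_matrix_def .
qed

end
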